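(* In the binary noisy-label setting described in the context, if $e_+,e_-<0.5$, then for all $y,y'\in\{-1,+1\}$, $$\left|\frac{\tilde P(y,y')}{\tilde Q(y,y')}-1\right|=O\big(1-e_+-e_-\big).$$
   Context: $(X,Y)$ with $X\in\mathcal X$, $Y\in\{-1,+1\}$; noisy label $\tilde Y$ generated from $Y$, conditionally independently of $X$ given $Y$, with $e_+={\mathbb P}(\tilde Y=-1\mid Y=+1)$, $e_-={\mathbb P}(\tilde Y=+1\mid Y=-1)$, $e_++e_-<1$. $h:\mathcal X\to\{-1,+1\}$ is a classifier, $\tilde P(y,y')={\mathbb P}(h(X)=y,\tilde Y=y')$ and $\tilde Q(y,y')={\mathbb P}(h(X)=y)\,{\mathbb P}(\tilde Y=y')$. The $O(\cdot)$ is with respect to the noise rates $e_+,e_-$, with $h$ and the distribution of $(X,Y)$ fixed. *)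

theory Defs
  imports "HOL-Probability.Probability"
begin

text \<open>The noisy label is generated from Y conditionally independently of X given Y, with
  flip rates ep = P(Yt = -1 | Y = +1) and em = P(Yt = +1 | Y = -1):
  for every measurable A, P(X in A, Y = y, Yt = y') = P(X in A, Y = y) * P(Yt = y' | Y = y).\<close>

definition noisy_label_model ::
  "'b measure \<Rightarrow> 'a measure \<Rightarrow> ('a \<times> int) measure \<Rightarrow> ('b \<Rightarrow> 'a) \<Rightarrow> ('b \<Rightarrow> int)
    \<Rightarrow> ('b \<Rightarrow> int) \<Rightarrow> real \<Rightarrow> real \<Rightarrow> bool" where
  "noisy_label_model M S D X Y Yt ep em \<longleftrightarrow>
     prob_space M \<and>
     X \<in> measurable M S \<and>
     Y \<in> measurable M (count_space UNIV) \<and>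
     Yt \<in> measurable M (count_space UNIV) \<and>
     distr M (S \<Otimes>\<^sub>M count_space UNIV) (\<lambda>\<omega>. (X \<omega>, Y \<omega>)) = D \<and>
     (\<forall>\<omega>\<in>space M. Y \<omega> \<in> {-1, 1} \<and> Yt \<omega> \<in> {-1, 1}) \<and>
     (\<forall>A\<in>sets S.
        measure M {\<omega>\<in>space M. X \<omega> \<in> A \<and> Y \<omega> = 1 \<and> Yt \<omega> = -1}
          = ep * measure M {\<omega>\<in>space M. X \<omega> \<in> A \<and> Y \<omega> = 1} \<and>
        measure M {\<omega>\<in>space M. X \<omega> \<in> A \<and> Y \<omega> = 1 \<and> Yt \<omega> = 1}
          = (1 - ep) * measure M {\<omega>\<in>space M. X \<omega> \<in> A \<and> Y \<omega> = 1} \<and>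
        measure M {\<omega>\<in>space M. X \<omega> \<in> A \<and> Y \<omega> = -1 \<and> Yt \<omega> = 1}
          = em * measure M {\<omega>\<in>space M. X \<omega> \<in> A \<and> Y \<omega> = -1} \<and>
        measure M {\<omega>\<in>space M. X \<omega> \<in> A \<and> Y \<omega> = -1 \<and> Yt \<omega> = -1}
          = (1 - em) * measure M {\<omega>\<in>space M. X \<omega> \<in> A \<and> Y \<omega> = -1})"

definition Ptilde :: "'b measure \<Rightarrow> ('b \<Rightarrow> 'a) \<Rightarrow> ('b \<Rightarrow> int) \<Rightarrow> ('a \<Rightarrow> int) \<Rightarrow> int \<Rightarrow> int \<Rightarrow> real" where
  "Ptilde M X Yt h y y' = measure M {\<omega>\<in>space M. h (X \<omega>) = y \<and> Yt \<omega> = y'}"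

definition Qtilde :: "'b measure \<Rightarrow> ('b \<Rightarrow> 'a) \<Rightarrow> ('b \<Rightarrow> int) \<Rightarrow> ('a \<Rightarrow> int) \<Rightarrow> int \<Rightarrow> int \<Rightarrow> real" where
  "Qtilde M X Yt h y y' =
     measure M {\<omega>\<in>space M. h (X \<omega>) = y} * measure M {\<omega>\<in>space M. Yt \<omega> = y'}"

end

theory Submission
  imports Defs
begin

text \<open>Split the event h(X) = y by the clean label: with a = P(h(X) = y, Y = +1),
  b = P(h(X) = y, Y = -1), p = P(Y = +1) and q = P(Y = -1), the conditional independence of the
  flips gives P~(y,+1) = (1-ep)a + em b and Q~(y,+1) = (a+b)((1-ep)p + em q), so that
  P~(y,+1) - Q~(y,+1) = (1-ep-em)(aq - bp). Since |aq - bp| \<le> a + b and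
  (1-ep)p + em q \<ge> p/2 for ep < 1/2, the relative deviation is at most
  2(1-ep-em)/p \<le> 2(1-ep-em)/(pq); if pq = 0 then aq = bp = 0 and there is no deviation.
  The case y' = -1 is the same with the two labels exchanged, and the constant 2/(pq) only
  depends on the law D of (X,Y).\<close>

lemma abs_cross_diff_le:
  fixes a b p q :: real
  assumes "0 \<le> a" "a \<le> p" "0 \<le> b" "b \<le> q" "p + q = 1"
  shows "\<bar>a * q - b * p\<bar> \<le> a + b"
proof -
  have "a * q \<le> a" "b * p \<le> b"
    using assms by (auto intro: mult_left_le)
  moreover have "0 \<le> a * q" "0 \<le> b * p"
    using assms by auto
  ultimately show ?thesis by linarith
qed

lemma flip_mixture_deviation_le:
  fixes a b p q ep em :: real
  assumes "0 \<le> a" "a \<le> p" "0 \<le> b" "b \<le> q" "p + q = 1"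
    and "ep \<le> 1/2" "0 \<le> em" "ep + em \<le> 1"
    and nonzero: "(a + b) * ((1 - ep) * p + em * q) \<noteq> 0"
  shows "\<bar>((1 - ep) * a + em * b) / ((a + b) * ((1 - ep) * p + em * q)) - 1\<bar>
           \<le> 2 / (p * q) * (1 - ep - em)"
proof -
  define k where "k = 1 - ep - em"
  define T where "T = (1 - ep) * p + em * q"
  have "k \<ge> 0" "p \<ge> 0" "q \<ge> 0"
    using assms unfolding k_def by linarith+
  have "T \<ge> p / 2"
  proof -
    have "1 / 2 * p \<le> (1 - ep) * p"
      using assms \<open>p \<ge> 0\<close> by (intro mult_right_mono) auto
    moreover have "0 \<le> em * q"
      using assms \<open>q \<ge> 0\<close> by simp
    ultimately show ?thesis
      unfolding T_def by linarith
  qed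
  have "a + b > 0" "T > 0"
    using nonzero[folded T_def] \<open>T \<ge> p / 2\<close> \<open>p \<ge> 0\<close> assms(1,3) by (auto simp: less_le)
  have deviation: "((1 - ep) * a + em * b) / ((a + b) * T) - 1 = k * (a * q - b * p) / ((a + b) * T)"
  proof -
    have q: "q = 1 - p"
      using \<open>p + q = 1\<close> by simp
    have numerator: "(1 - ep) * a + em * b - (a + b) * T = k * (a * q - b * p)"
      unfolding k_def T_def q by (simp add: algebra_simps)
    have "(a + b) * T \<noteq> 0"
      using \<open>a + b > 0\<close> \<open>T > 0\<close> by simp
    then have "((1 - ep) * a + em * b) / ((a + b) * T) - 1
        = ((1 - ep) * a + em * b - (a + b) * T) / ((a + b) * T)"
      by (simp add: diff_divide_distrib)
    then show ?thesis
      unfolding numerator .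
  qed
  have "\<bar>k * (a * q - b * p) / ((a + b) * T)\<bar> \<le> 2 / (p * q) * k"
  proof (cases "p * q = 0")
    case True
    then have "a * q - b * p = 0"
      using assms by auto
    then have "\<bar>k * (a * q - b * p) / ((a + b) * T)\<bar> = 0"
      by simp
    also have "\<dots> = 2 / (p * q) * k"
      unfolding True by simp
    finally show ?thesis
      by simp
  next
    case False
    then have "p > 0" "q > 0" "q \<le> 1"
      using \<open>p \<ge> 0\<close> \<open>q \<ge> 0\<close> \<open>p + q = 1\<close> by auto
    have "\<bar>k * (a * q - b * p) / ((a + b) * T)\<bar> = k * \<bar>a * q - b * p\<bar> / ((a + b) * T)"
      using \<open>k \<ge> 0\<close> \<open>a + b > 0\<close> \<open>T > 0\<close> by (simp add: abs_mult abs_divide)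
    also have "\<dots> \<le> k * (a + b) / ((a + b) * T)"
      using abs_cross_diff_le[OF assms(1-5)] \<open>k \<ge> 0\<close> \<open>a + b > 0\<close> \<open>T > 0\<close>
      by (intro divide_right_mono mult_left_mono) auto
    also have "\<dots> = k / T"
      using \<open>a + b > 0\<close> by simp
    also have "\<dots> \<le> k / (p / 2)"
      using \<open>T \<ge> p / 2\<close> \<open>p > 0\<close> \<open>k \<ge> 0\<close> by (intro divide_left_mono) auto
    also have "\<dots> \<le> 2 / (p * q) * k"
      using \<open>p > 0\<close> \<open>q > 0\<close> \<open>q \<le> 1\<close> \<open>k \<ge> 0\<close> by (simp add: field_simps mult_left_le)
    finally show ?thesis .
  qed
  then show ?thesis
    unfolding deviation[symmetric] unfolding k_def T_def .
qed

lemma measure_split_by_label: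
  fixes L :: "'b \<Rightarrow> int"
  assumes "finite_measure M" and [measurable]: "{\<omega>\<in>space M. P \<omega>} \<in> sets M"
    and [measurable]: "L \<in> measurable M (count_space UNIV)"
    and "\<forall>\<omega>\<in>space M. L \<omega> \<in> {-1, 1}"
  shows "measure M {\<omega>\<in>space M. P \<omega>}
           = measure M {\<omega>\<in>space M. P \<omega> \<and> L \<omega> = 1} + measure M {\<omega>\<in>space M. P \<omega> \<and> L \<omega> = -1}"
proof -
  interpret finite_measure M by fact
  have "{\<omega>\<in>space M. P \<omega>} = {\<omega>\<in>space M. P \<omega> \<and> L \<omega> = 1} \<union> {\<omega>\<in>space M. P \<omega> \<and> L \<omega> = -1}"
    using assms(4) by auto
  moreover have "{\<omega>\<in>space M. P \<omega> \<and> L \<omega> = c} \<in> sets M" for c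
    by measurable
  ultimately show ?thesis
    by (auto intro!: finite_measure_Union)
qed

lemma noisy_label_modelD:
  assumes "noisy_label_model M S D X Y Yt ep em"
  shows "prob_space M" and "X \<in> measurable M S" and "Y \<in> measurable M (count_space UNIV)"
    and "Yt \<in> measurable M (count_space UNIV)" and "\<forall>\<omega>\<in>space M. Y \<omega> \<in> {-1, 1}"
  using assms unfolding noisy_label_model_def by auto

lemma noisy_label_model_measure_Yt:
  assumes model: "noisy_label_model M S D X Y Yt ep em" and A: "A \<in> sets S"
  shows "measure M {\<omega>\<in>space M. X \<omega> \<in> A \<and> Yt \<omega> = 1}
           = (1 - ep) * measure M {\<omega>\<in>space M. X \<omega> \<in> A \<and> Y \<omega> = 1}
             + em * measure M {\<omega>\<in>space M. X \<omega> \<in> A \<and> Y \<omega> = -1}"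
    and "measure M {\<omega>\<in>space M. X \<omega> \<in> A \<and> Yt \<omega> = -1}
           = ep * measure M {\<omega>\<in>space M. X \<omega> \<in> A \<and> Y \<omega> = 1}
             + (1 - em) * measure M {\<omega>\<in>space M. X \<omega> \<in> A \<and> Y \<omega> = -1}"
proof -
  note [measurable] = noisy_label_modelD(2-4)[OF model] A
  note labels = noisy_label_modelD(5)[OF model]
  have "finite_measure M"
    using noisy_label_modelD(1)[OF model] by (simp add: prob_space.finite_measure)
  have split: "measure M {\<omega>\<in>space M. X \<omega> \<in> A \<and> Yt \<omega> = c}
      = measure M {\<omega>\<in>space M. X \<omega> \<in> A \<and> Y \<omega> = 1 \<and> Yt \<omega> = c}
        + measure M {\<omega>\<in>space M. X \<omega> \<in> A \<and> Y \<omega> = -1 \<and> Yt \<omega> = c}" for c :: int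
  proof -
    have "measure M {\<omega>\<in>space M. X \<omega> \<in> A \<and> Yt \<omega> = c}
        = measure M {\<omega>\<in>space M. (X \<omega> \<in> A \<and> Yt \<omega> = c) \<and> Y \<omega> = 1}
          + measure M {\<omega>\<in>space M. (X \<omega> \<in> A \<and> Yt \<omega> = c) \<and> Y \<omega> = -1}"
      by (rule measure_split_by_label[OF \<open>finite_measure M\<close> _ _ labels]) measurable
    then show ?thesis
      by (simp only: conj_assoc conj_comms)
  qed
  show "measure M {\<omega>\<in>space M. X \<omega> \<in> A \<and> Yt \<omega> = 1}
           = (1 - ep) * measure M {\<omega>\<in>space M. X \<omega> \<in> A \<and> Y \<omega> = 1}
             + em * measure M {\<omega>\<in>space M. X \<omega> \<in> A \<and> Y \<omega> = -1}"
       "measure M {\<omega>\<in>space M. X \<omega> \<in> A \<and> Yt \<omega> = -1}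
           = ep * measure M {\<omega>\<in>space M. X \<omega> \<in> A \<and> Y \<omega> = 1}
             + (1 - em) * measure M {\<omega>\<in>space M. X \<omega> \<in> A \<and> Y \<omega> = -1}"
    using model A unfolding split noisy_label_model_def by auto
qed

lemma noisy_label_model_measure_Y:
  assumes model: "noisy_label_model M S D X Y Yt ep em"
  shows "measure M {\<omega>\<in>space M. Y \<omega> = y} = measure D (space S \<times> {y})"
proof -
  note [measurable] = noisy_label_modelD(2,3)[OF model]
  have "measure D (space S \<times> {y})
      = measure M ((\<lambda>\<omega>. (X \<omega>, Y \<omega>)) -` (space S \<times> {y}) \<inter> space M)"
    using model unfolding noisy_label_model_def by (auto intro!: measure_distr)
  also have "(\<lambda>\<omega>. (X \<omega>, Y \<omega>)) -` (space S \<times> {y}) \<inter> space M = {\<omega>\<in>space M. Y \<omega> = y}"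
    using measurable_space[OF noisy_label_modelD(2)[OF model]] by auto
  finally show ?thesis ..
qed

lemma noisy_label_model_label_measures_sum:
  assumes model: "noisy_label_model M S D X Y Yt ep em"
  shows "measure D (space S \<times> {1}) + measure D (space S \<times> {-1}) = 1"
proof -
  interpret prob_space M
    using noisy_label_modelD(1)[OF model] .
  note [measurable] = noisy_label_modelD(3)[OF model]
  have "measure M {\<omega>\<in>space M. True}
      = measure M {\<omega>\<in>space M. True \<and> Y \<omega> = 1} + measure M {\<omega>\<in>space M. True \<and> Y \<omega> = -1}"
    by (rule measure_split_by_label[OF finite_measure _ _ noisy_label_modelD(5)[OF model]]) measurable
  then show ?thesis
    by (simp add: prob_space noisy_label_model_measure_Y[OF model])
qed

lemma noisy_label_model_measure_Y_le:
  assumes model: "noisy_label_model M S D X Y Yt ep em"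
  shows "measure M {\<omega>\<in>space M. P \<omega> \<and> Y \<omega> = y} \<le> measure D (space S \<times> {y})"
proof -
  interpret prob_space M
    using noisy_label_modelD(1)[OF model] .
  note [measurable] = noisy_label_modelD(3)[OF model]
  have "measure M {\<omega>\<in>space M. P \<omega> \<and> Y \<omega> = y} \<le> measure M {\<omega>\<in>space M. Y \<omega> = y}"
    by (intro finite_measure_mono) auto
  then show ?thesis
    unfolding noisy_label_model_measure_Y[OF model] .
qed

lemma noisy_label_model_Ptilde_Qtilde:
  fixes y :: int
  assumes model: "noisy_label_model M S D X Y Yt ep em"
    and h: "h \<in> measurable S (count_space UNIV)"
  defines "a \<equiv> measure M {\<omega>\<in>space M. h (X \<omega>) = y \<and> Y \<omega> = 1}"
    and "b \<equiv> measure M {\<omega>\<in>space M. h (X \<omega>) = y \<and> Y \<omega> = -1}"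
    and "p \<equiv> measure D (space S \<times> {1})"
    and "q \<equiv> measure D (space S \<times> {-1})"
  shows "Ptilde M X Yt h y 1 = (1 - ep) * a + em * b"
    and "Qtilde M X Yt h y 1 = (a + b) * ((1 - ep) * p + em * q)"
    and "Ptilde M X Yt h y (-1) = (1 - em) * b + ep * a"
    and "Qtilde M X Yt h y (-1) = (b + a) * ((1 - em) * q + ep * p)"
proof -
  interpret prob_space M
    using noisy_label_modelD(1)[OF model] .
  note [measurable] = noisy_label_modelD(2,3)[OF model] h
  define A where "A = h -` {y} \<inter> space S"
  have [measurable]: "A \<in> sets S"
    unfolding A_def by measurable
  have "X \<omega> \<in> space S" if "\<omega> \<in> space M" for \<omega>
    using measurable_space[OF noisy_label_modelD(2)[OF model] that] .
  then have X_A: "{\<omega>\<in>space M. h (X \<omega>) = y \<and> Z \<omega> = c} = {\<omega>\<in>space M. X \<omega> \<in> A \<and> Z \<omega> = c}"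
    and X_S: "{\<omega>\<in>space M. Z \<omega> = c} = {\<omega>\<in>space M. X \<omega> \<in> space S \<and> Z \<omega> = c}"
    for Z :: "_ \<Rightarrow> int" and c
    unfolding A_def by auto
  have "measure M {\<omega>\<in>space M. h (X \<omega>) = y}
      = measure M {\<omega>\<in>space M. h (X \<omega>) = y \<and> Y \<omega> = 1} + measure M {\<omega>\<in>space M. h (X \<omega>) = y \<and> Y \<omega> = -1}"
    by (rule measure_split_by_label[OF finite_measure _ _ noisy_label_modelD(5)[OF model]]) measurable
  then have h_measure: "measure M {\<omega>\<in>space M. h (X \<omega>) = y} = a + b"
    unfolding a_def b_def .
  note Yt_A = noisy_label_model_measure_Yt[OF model \<open>A \<in> sets S\<close>, folded X_A]
  note Yt_S = noisy_label_model_measure_Yt[OF model sets.top, folded X_S,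
      unfolded noisy_label_model_measure_Y[OF model]]
  show "Ptilde M X Yt h y 1 = (1 - ep) * a + em * b"
    and "Qtilde M X Yt h y 1 = (a + b) * ((1 - ep) * p + em * q)"
    and "Ptilde M X Yt h y (-1) = (1 - em) * b + ep * a"
    and "Qtilde M X Yt h y (-1) = (b + a) * ((1 - em) * q + ep * p)"
    unfolding Ptilde_def Qtilde_def h_measure Yt_A Yt_S a_def b_def p_def q_def
    by (simp_all add: ac_simps)
qed

lemma noisy_label_model_relative_deviation_le:
  assumes model: "noisy_label_model M S D X Y Yt ep em"
    and h: "h \<in> measurable S (count_space UNIV)"
    and rates: "0 \<le> ep" "ep < 1/2" "0 \<le> em" "em < 1/2"
    and "y' \<in> {-1, 1}" and nonzero: "Qtilde M X Yt h y y' \<noteq> 0"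
  shows "\<bar>Ptilde M X Yt h y y' / Qtilde M X Yt h y y' - 1\<bar>
           \<le> 2 / (measure D (space S \<times> {1}) * measure D (space S \<times> {-1})) * (1 - ep - em)"
proof -
  define p where "p = measure D (space S \<times> {1})"
  define q where "q = measure D (space S \<times> {-1})"
  define a where "a = measure M {\<omega>\<in>space M. h (X \<omega>) = y \<and> Y \<omega> = 1}"
  define b where "b = measure M {\<omega>\<in>space M. h (X \<omega>) = y \<and> Y \<omega> = -1}"
  have bounds: "0 \<le> a" "a \<le> p" "0 \<le> b" "b \<le> q"
    unfolding a_def b_def p_def q_def by (simp_all add: noisy_label_model_measure_Y_le[OF model])
  have "p + q = 1"
    unfolding p_def q_def by (rule noisy_label_model_label_measures_sum[OF model])
  note PQ = noisy_label_model_Ptilde_Qtilde[OF model h, of y, folded a_def b_def p_def q_def]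
  from \<open>y' \<in> {-1, 1}\<close> consider "y' = 1" | "y' = -1"
    by auto
  then have "\<bar>Ptilde M X Yt h y y' / Qtilde M X Yt h y y' - 1\<bar> \<le> 2 / (p * q) * (1 - ep - em)"
  proof cases
    case 1
    have "\<bar>((1 - ep) * a + em * b) / ((a + b) * ((1 - ep) * p + em * q)) - 1\<bar>
        \<le> 2 / (p * q) * (1 - ep - em)"
      using bounds \<open>p + q = 1\<close> rates nonzero
      by (intro flip_mixture_deviation_le) (simp_all add: 1 PQ)
    then show ?thesis
      by (simp only: 1 PQ)
  next
    case 2
    have "\<bar>((1 - em) * b + ep * a) / ((b + a) * ((1 - em) * q + ep * p)) - 1\<bar>
        \<le> 2 / (q * p) * (1 - em - ep)"
      using bounds \<open>p + q = 1\<close> rates nonzero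
      by (intro flip_mixture_deviation_le) (simp_all add: 2 PQ)
    then show ?thesis
      by (simp only: 2 PQ mult.commute[of q p] diff_diff_eq add.commute[of em ep])
  qed
  then show ?thesis
    unfolding p_def q_def .
qed

theorem proposition1:
  fixes S :: "'a measure" and D :: "('a \<times> int) measure" and h :: "'a \<Rightarrow> int"
  assumes "h \<in> measurable S (count_space UNIV)"
    and "\<forall>x. h x \<in> {-1, 1}"
  shows "\<exists>C::real. \<forall>(M::'b measure) X Y Yt ep em.
           noisy_label_model M S D X Y Yt ep em \<and> 0 \<le> ep \<and> ep < 1/2 \<and> 0 \<le> em \<and> em < 1/2 \<longrightarrow>
           (\<forall>y\<in>{-1, 1}. \<forall>y'\<in>{-1, 1}. Qtilde M X Yt h y y' \<noteq> 0 \<longrightarrow>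
              \<bar>Ptilde M X Yt h y y' / Qtilde M X Yt h y y' - 1\<bar> \<le> C * (1 - ep - em))"
  \<comment> \<open>The bound holds for every value y.\<close>
  using noisy_label_model_relative_deviation_le[OF _ assms(1)]
  by (intro exI[of _ "2 / (measure D (space S \<times> {1}) * measure D (space S \<times> {-1}))"]) blast

end
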